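(* Let $m=2$ and $n>4$. Let $\mathcal{C}$ be the class of all complete acyclic binary tree CP-nets over $n$ variables, over $\mathcal{X}_{swap}$. (1) If $|F^1(x)\cap L|\le n-4$ for every $x\in\mathcal{X}_{swap}$, then $\mathcal{C}$ is learnable with membership queries to a limited oracle. (2) If $|F^1(x)\cap L|\le\lfloor\frac{n-1}{2}\rfloor-2$ for every $x\in\mathcal{X}_{swap}$, then $\mathcal{C}$ is learnable with membership queries to a malicious oracle. In either case, the worst-case number of queries is in $O(n^2+e_{N^*}n\log_2(n))$, where $e_{N^*}$ is the number of edges of the target CP-net $N^*$.
   Context: Variables $V=\{v_1,\dots,v_n\}$ with binary domains. An outcome assigns a value to every variable. A complete CP-net gives each $v_i$ a parent set $Pa(v_i)\subseteq V\setminus\{v_i\}$ and, for each assignment to $Pa(v_i)$, a strict order on $D_{v_i}$; parents are non-dummy. A tree CP-net is acyclic (parent graph with edges $(v_j,v_i)$, $v_j\in Pa(v_i)$, has no cycle) with every $|Pa(v_i)|\le 1$. Improving flip: changing only $v_i$ to the value preferred under the order for context $o[Pa(v_i)]$; $o'\succ o$ iff a nonempty sequence of improving flips leads from $o$ to $o'$. A swap is an ordered pair $x=(x.1,x.2)$ of outcomes differing in exactly one variable $V(x)$; $\mathcal{X}_{swap}$ contains exactly one ordering of each such pair (fixed arbitrarily); the target concept is $c^*(x)=1$ iff $x.1\succ x.2$ under the target $N^*$. $F^1(x)$ is the set of swaps $x'\in\mathcal{X}_{swap}$ with $V(x')=V(x)$ whose outcomes differ from those of $x$ in exactly one variable other than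 $V(x)$. A set $L\subseteq\mathcal{X}_{swap}$ is fixed in advance by an adversary and unknown to the learner. A limited oracle answers $c^*(x)$ for $x\notin L$ and "I don't know" for $x\in L$; a malicious oracle answers $c^*(x)$ for $x\notin L$ and $1-c^*(x)$ for $x\in L$; both are persistent. A class is learnable with membership queries to a limited (malicious) oracle if some algorithm exactly identifies every target using a number of queries polynomial in $n$, the target's size (number of CPT statements) and $|L|$. *)

theory Defs
  imports Complex_Main
begin

text \<open>Variables are 0..n-1, binary domains are bool.  An outcome is a function
  nat => bool that is False outside {..<n} (canonical representation).\<close>

type_synonym outcome = "nat \<Rightarrow> bool"
type_synonym swap = "outcome \<times> outcome"

text \<open>A tree CP-net is represented as (par, pref): par i = Some j means Pa(v_i) = {v_j},
  par i = None means Pa(v_i) is empty; pref i b is the preferred value of v_i when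
  its parent has value b (for parentless variables pref i is constant).  The
  conventions in tree_cpnet make the representation unique, so exact identification
  is equality of representations.\<close>

type_synonym cpnet = "(nat \<Rightarrow> nat option) \<times> (nat \<Rightarrow> bool \<Rightarrow> bool)"

definition outcomes :: "nat \<Rightarrow> outcome set" where
  "outcomes n = {w. \<forall>j\<ge>n. w j = False}"

definition diffs :: "outcome \<Rightarrow> outcome \<Rightarrow> nat set" where
  "diffs a b = {i. a i \<noteq> b i}"

definition flip :: "nat \<Rightarrow> outcome \<Rightarrow> outcome" where
  "flip j w = w(j := \<not> w j)"

definition tree_cpnet :: "nat \<Rightarrow> cpnet \<Rightarrow> bool" where
  "tree_cpnet n N \<longleftrightarrow>
     (\<forall>i j. fst N i = Some j \<longrightarrow> i < n \<and> j < n \<and> j \<noteq> i) \<and>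
     (\<forall>i\<ge>n. fst N i = None \<and> snd N i = (\<lambda>_. False)) \<and>
     (\<forall>i<n. fst N i = None \<longrightarrow> snd N i True = snd N i False) \<and>
     (\<forall>i<n. fst N i \<noteq> None \<longrightarrow> snd N i True \<noteq> snd N i False) \<and>
     acyclic {(j, i). fst N i = Some j}"

definition ctx :: "cpnet \<Rightarrow> outcome \<Rightarrow> nat \<Rightarrow> bool" where
  "ctx N w i = (case fst N i of None \<Rightarrow> False | Some j \<Rightarrow> w j)"

definition improving_flip :: "nat \<Rightarrow> cpnet \<Rightarrow> outcome \<Rightarrow> outcome \<Rightarrow> bool" where
  "improving_flip n N w w' \<longleftrightarrow> w \<in> outcomes n \<and>
     (\<exists>i<n. w i \<noteq> snd N i (ctx N w i) \<and> w' = w(i := snd N i (ctx N w i)))"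

text \<open>prefers n N w' w  means  w' \<succ> w  (nonempty sequence of improving flips from w to w')\<close>
definition prefers :: "nat \<Rightarrow> cpnet \<Rightarrow> outcome \<Rightarrow> outcome \<Rightarrow> bool" where
  "prefers n N w' w \<longleftrightarrow> (improving_flip n N)\<^sup>+\<^sup>+ w w'"

definition swaps :: "nat \<Rightarrow> swap set" where
  "swaps n = {(a, b). a \<in> outcomes n \<and> b \<in> outcomes n \<and> (\<exists>i<n. diffs a b = {i})}"

definition swap_set :: "nat \<Rightarrow> swap set \<Rightarrow> bool" where
  "swap_set n X \<longleftrightarrow> X \<subseteq> swaps n \<and> (\<forall>a b. (a, b) \<in> swaps n \<longrightarrow> ((a, b) \<in> X \<longleftrightarrow> (b, a) \<notin> X))"

definition swap_var :: "swap \<Rightarrow> nat" where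
  "swap_var x = (THE i. diffs (fst x) (snd x) = {i})"

definition F1 :: "nat \<Rightarrow> swap set \<Rightarrow> swap \<Rightarrow> swap set" where
  "F1 n X x = {x' \<in> X. swap_var x' = swap_var x \<and>
      (\<exists>j<n. j \<noteq> swap_var x \<and> {fst x', snd x'} = {flip j (fst x), flip j (snd x)})}"

definition concept :: "nat \<Rightarrow> cpnet \<Rightarrow> swap \<Rightarrow> bool" where
  "concept n N x \<longleftrightarrow> prefers n N (fst x) (snd x)"

definition num_edges :: "cpnet \<Rightarrow> nat" where
  "num_edges N = card {i. fst N i \<noteq> None}"

text \<open>number of CPT statements: 2^|Pa(v_i)| per variable\<close>
definition cpt_size :: "nat \<Rightarrow> cpnet \<Rightarrow> nat" where
  "cpt_size n N = n + num_edges N"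

text \<open>Oracles (persistent: deterministic functions of the query).
  Limited oracle: None = "I don't know".\<close>
definition limited_oracle :: "nat \<Rightarrow> cpnet \<Rightarrow> swap set \<Rightarrow> swap \<Rightarrow> bool option" where
  "limited_oracle n N L x = (if x \<in> L then None else Some (concept n N x))"

definition malicious_oracle :: "nat \<Rightarrow> cpnet \<Rightarrow> swap set \<Rightarrow> swap \<Rightarrow> bool" where
  "malicious_oracle n N L x = (if x \<in> L then \<not> concept n N x else concept n N x)"

text \<open>Adaptive query algorithms as decision trees.\<close>
datatype ('q, 'a, 'r) strat = Done 'r | Ask 'q "'a \<Rightarrow> ('q, 'a, 'r) strat"

primrec run :: "('q \<Rightarrow> 'a) \<Rightarrow> 'q set \<Rightarrow> ('q, 'a, 'r) strat \<Rightarrow> ('r \<times> nat) option" where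
  "run orc Q (Done r) = Some (r, 0)"
| "run orc Q (Ask q k) = (if q \<in> Q then map_option (\<lambda>(r, c). (r, Suc c)) (run orc Q (k (orc q))) else None)"

definition learns_with ::
  "(nat \<Rightarrow> cpnet \<Rightarrow> swap set \<Rightarrow> swap \<Rightarrow> 'a) \<Rightarrow> (nat \<Rightarrow> swap set \<Rightarrow> swap set \<Rightarrow> bool)
    \<Rightarrow> (nat \<Rightarrow> cpnet \<Rightarrow> nat \<Rightarrow> real) \<Rightarrow> bool" where
  "learns_with orc P B \<longleftrightarrow>
    (\<exists>S :: nat \<Rightarrow> swap set \<Rightarrow> (swap, 'a, cpnet) strat.
       \<forall>n X N L. swap_set n X \<longrightarrow> tree_cpnet n N \<longrightarrow> L \<subseteq> X \<longrightarrow> P n X L \<longrightarrow>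
         (\<exists>q. run (orc n N L) X (S n X) = Some (N, q) \<and> real q \<le> B n N (card L)))"

definition learnable ::
  "(nat \<Rightarrow> cpnet \<Rightarrow> swap set \<Rightarrow> swap \<Rightarrow> 'a) \<Rightarrow> (nat \<Rightarrow> swap set \<Rightarrow> swap set \<Rightarrow> bool) \<Rightarrow> bool" where
  "learnable orc P \<longleftrightarrow> (\<exists>c d. learns_with orc P (\<lambda>n N l. c * real (n + cpt_size n N + l + 1) ^ d))"

definition query_bound :: "nat \<Rightarrow> cpnet \<Rightarrow> nat \<Rightarrow> real" where
  "query_bound n N l = real n ^ 2 + real (num_edges N) * real n * log 2 (real n)"

end

theory Submission
  imports Defs "HOL-Library.Log_Nat"
begin

text \<open>Improving flips of a tree CP-net cannot cycle, since the potential summing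
  \<open>(n + 1) ^ (n - depth v\<^sub>m)\<close> over the variables \<open>v\<^sub>m\<close> that do not take their preferred value
  strictly decreases. Hence a swap \<open>(a, b)\<close> on \<open>v\<^sub>i\<close> is preferred iff \<open>a\<^sub>i\<close> is the value
  preferred in the context of \<open>a\<close>.

  To learn the preferred value of \<open>v\<^sub>i\<close> at an outcome \<open>v\<close>, ask the \<open>n - 1\<close> swaps on \<open>v\<^sub>i\<close> at the
  outcomes obtained from \<open>v\<close> by flipping one other variable. They all lie in \<open>F\<^sup>1\<close> of the swap
  at \<open>v\<close>, and only flipping the parent of \<open>v\<^sub>i\<close> changes its context, so under the bounds on
  \<open>F\<^sup>1 \<inter> L\<close> the majority of the answers is correct. Majorities at the two constant outcomes
  give the CPT of \<open>v\<^sub>i\<close>, and majorities at one outcome per bit of the variable indices give the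
  index of its parent: \<open>2n(n - 1) + e(n - 1)(\<lfloor>log n\<rfloor> + 1)\<close> queries for a net with \<open>e\<close> edges.\<close>

section \<open>Adaptive query strategies\<close>

primrec bind_strat :: "('q, 'a, 'r) strat \<Rightarrow> ('r \<Rightarrow> ('q, 'a, 's) strat) \<Rightarrow> ('q, 'a, 's) strat" where
  "bind_strat (Done r) f = f r"
| "bind_strat (Ask q k) f = Ask q (\<lambda>a. bind_strat (k a) f)"

lemma run_bind_strat:
  assumes "run orc Q s = Some (r, c)" and "run orc Q (f r) = Some (r', c')"
  shows "run orc Q (bind_strat s f) = Some (r', c + c')"
  using assms by (induction s arbitrary: c) (auto split: if_splits)

fun ask_all :: "'i list \<Rightarrow> ('i \<Rightarrow> 'q) \<Rightarrow> ('q, 'a, 'i \<Rightarrow> 'a) strat" where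
  "ask_all [] qf = Done (\<lambda>_. undefined)"
| "ask_all (j # js) qf = Ask (qf j) (\<lambda>a. bind_strat (ask_all js qf) (\<lambda>f. Done (f(j := a))))"

lemma run_ask_all:
  assumes "qf ` set js \<subseteq> Q"
  shows "\<exists>f. run orc Q (ask_all js qf) = Some (f, length js) \<and> (\<forall>j\<in>set js. f j = orc (qf j))"
  using assms
proof (induction js)
  case (Cons j js)
  then obtain f where f: "run orc Q (ask_all js qf) = Some (f, length js)" "\<forall>j\<in>set js. f j = orc (qf j)"
    by auto
  have "run orc Q (bind_strat (ask_all js qf) (\<lambda>f. Done (f(j := orc (qf j))))) =
      Some (f(j := orc (qf j)), length js + 0)"
    by (rule run_bind_strat[OF f(1)]) simp
  then show ?case using Cons.prems f(2) by auto
qed simp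

fun sequence_strats :: "('q, 'a, 'r) strat list \<Rightarrow> ('q, 'a, 'r list) strat" where
  "sequence_strats [] = Done []"
| "sequence_strats (s # ss) = bind_strat s (\<lambda>r. bind_strat (sequence_strats ss) (\<lambda>rs. Done (r # rs)))"

lemma run_sequence_strats:
  assumes "\<And>x. x \<in> set xs \<Longrightarrow> run orc Q (s x) = Some (f x, c x)"
  shows "run orc Q (sequence_strats (map s xs)) = Some (map f xs, sum_list (map c xs))"
  using assms
proof (induction xs)
  case (Cons x xs)
  have "run orc Q (bind_strat (sequence_strats (map s xs)) (\<lambda>rs. Done (f x # rs))) =
      Some (f x # map f xs, sum_list (map c xs) + 0)"
    using Cons by (intro run_bind_strat) auto
  then show ?case using Cons.prems by (auto intro: run_bind_strat[THEN trans])
qed simp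

section \<open>Tree CP-nets and acyclicity of improving flips\<close>

lemma tree_cpnet_parentD:
  "tree_cpnet n N \<Longrightarrow> fst N i = Some j \<Longrightarrow> i < n \<and> j < n \<and> j \<noteq> i"
  unfolding tree_cpnet_def by blast

lemma tree_cpnet_beyond:
  "tree_cpnet n N \<Longrightarrow> n \<le> i \<Longrightarrow> fst N i = None \<and> snd N i = (\<lambda>_. False)"
  unfolding tree_cpnet_def by blast

lemma tree_cpnet_root_pref:
  assumes "tree_cpnet n N" and "i < n" and "fst N i = None"
  shows "snd N i b = snd N i c"
proof -
  have "snd N i True = snd N i False" using assms unfolding tree_cpnet_def by blast
  then show ?thesis by (cases b; cases c) simp_all
qed

lemma tree_cpnet_child_pref:
  "tree_cpnet n N \<Longrightarrow> i < n \<Longrightarrow> fst N i \<noteq> None \<Longrightarrow> snd N i True \<noteq> snd N i False"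
  unfolding tree_cpnet_def by blast

definition parent_rel :: "cpnet \<Rightarrow> (nat \<times> nat) set" where
  "parent_rel N = {(j, i). fst N i = Some j}"

definition depth :: "cpnet \<Rightarrow> nat \<Rightarrow> nat" where
  "depth N i = card {j. (j, i) \<in> (parent_rel N)\<^sup>+}"

lemma ancestors_subset:
  assumes "tree_cpnet n N"
  shows "{j. (j, i) \<in> (parent_rel N)\<^sup>+} \<subseteq> {..<n}"
proof
  fix j assume "j \<in> {j. (j, i) \<in> (parent_rel N)\<^sup>+}"
  then obtain z where "(j, z) \<in> parent_rel N" by (auto dest: tranclD)
  then show "j \<in> {..<n}" using tree_cpnet_parentD[OF assms] by (auto simp: parent_rel_def)
qed

lemma depth_le: "tree_cpnet n N \<Longrightarrow> depth N i \<le> n"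
  unfolding depth_def using card_mono[OF finite_lessThan ancestors_subset] by fastforce

lemma depth_parent_less:
  assumes T: "tree_cpnet n N" and p: "fst N i = Some p"
  shows "depth N p < depth N i"
proof -
  have edge: "(p, i) \<in> parent_rel N" using p by (simp add: parent_rel_def)
  have "acyclic (parent_rel N)" using T unfolding tree_cpnet_def parent_rel_def by simp
  then have "p \<notin> {j. (j, p) \<in> (parent_rel N)\<^sup>+}" by (auto simp: acyclic_def)
  moreover have "p \<in> {j. (j, i) \<in> (parent_rel N)\<^sup>+}" using edge by auto
  moreover have "{j. (j, p) \<in> (parent_rel N)\<^sup>+} \<subseteq> {j. (j, i) \<in> (parent_rel N)\<^sup>+}"
    using edge by (auto intro: trancl_into_trancl)
  ultimately have "{j. (j, p) \<in> (parent_rel N)\<^sup>+} \<subset> {j. (j, i) \<in> (parent_rel N)\<^sup>+}" by blast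
  moreover have "finite {j. (j, i) \<in> (parent_rel N)\<^sup>+}"
    using ancestors_subset[OF T] finite_subset by blast
  ultimately show ?thesis unfolding depth_def by (rule psubset_card_mono[rotated])
qed

definition preferred_value :: "cpnet \<Rightarrow> nat \<Rightarrow> outcome \<Rightarrow> bool" where
  "preferred_value N i w = snd N i (ctx N w i)"

lemma preferred_value_upd:
  "fst N m \<noteq> Some i \<Longrightarrow> preferred_value N m (w(i := b)) = preferred_value N m w"
  unfolding preferred_value_def ctx_def by (cases "fst N m") auto

definition weight :: "nat \<Rightarrow> cpnet \<Rightarrow> nat \<Rightarrow> nat" where
  "weight n N i = (n + 1) ^ (n - depth N i)"

definition potential :: "nat \<Rightarrow> cpnet \<Rightarrow> outcome \<Rightarrow> nat" where
  "potential n N w = (\<Sum>m<n. if w m \<noteq> preferred_value N m w then weight n N m else 0)"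

lemma sum_weight_children_less:
  assumes T: "tree_cpnet n N"
  shows "(\<Sum>m | m < n \<and> fst N m = Some i. weight n N m) < weight n N i"
proof (cases "\<exists>m. fst N m = Some i")
  case False
  then show ?thesis by (simp add: weight_def)
next
  case True
  then obtain m0 where "fst N m0 = Some i" by blast
  then have di: "depth N i < n" using depth_parent_less[OF T] depth_le[OF T, of m0] by fastforce
  let ?C = "{m. m < n \<and> fst N m = Some i}"
  have "weight n N m \<le> (n + 1) ^ (n - depth N i - 1)" if "m \<in> ?C" for m
  proof -
    have "depth N i < depth N m" using depth_parent_less[OF T] that by blast
    then show ?thesis unfolding weight_def by (intro power_increasing) auto
  qed
  then have "(\<Sum>m\<in>?C. weight n N m) \<le> card ?C * (n + 1) ^ (n - depth N i - 1)"
    using sum_bounded_above[of ?C "weight n N"] by simp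
  also have "\<dots> \<le> n * (n + 1) ^ (n - depth N i - 1)"
    using card_mono[of "{..<n}" ?C] by (intro mult_right_mono) auto
  also have "\<dots> < (n + 1) ^ (n - depth N i)"
    using di by (cases "n - depth N i") auto
  finally show ?thesis by (simp add: weight_def)
qed

text \<open>An improving flip of \<open>v\<^sub>i\<close> removes the weight of \<open>v\<^sub>i\<close> from the potential and can
  only add the weights of the children of \<open>v\<^sub>i\<close>, the only variables whose context changes.\<close>

lemma improving_flip_potential_less:
  assumes T: "tree_cpnet n N" and F: "improving_flip n N w w'"
  shows "potential n N w' < potential n N w"
proof -
  obtain i where i: "i < n" "w i \<noteq> preferred_value N i w" "w' = w(i := preferred_value N i w)"
    using F unfolding improving_flip_def preferred_value_def by auto
  have no_loop: "fst N i \<noteq> Some i" using tree_cpnet_parentD[OF T] by blast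
  let ?C = "{m. m < n \<and> fst N m = Some i}"
  let ?t = "\<lambda>w m. if w m \<noteq> preferred_value N m w then weight n N m else 0"
  have "?t w' m + (if m = i then weight n N m else 0) \<le> ?t w m + (if m \<in> ?C then weight n N m else 0)"
    if "m < n" for m
  proof (cases "m = i")
    case True
    then show ?thesis using i(2,3) preferred_value_upd[OF no_loop, of w] by simp
  next
    case m_ne: False
    show ?thesis
    proof (cases "m \<in> ?C")
      case False
      then have "fst N m \<noteq> Some i" using that by simp
      then show ?thesis using m_ne i(3) preferred_value_upd[of N m i w] by simp
    qed (simp add: m_ne)
  qed
  then have "(\<Sum>m<n. ?t w' m + (if m = i then weight n N m else 0))
      \<le> (\<Sum>m<n. ?t w m + (if m \<in> ?C then weight n N m else 0))"
    by (intro sum_mono) auto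
  moreover have "(\<Sum>m<n. if m \<in> ?C then weight n N m else 0) = (\<Sum>m\<in>?C. weight n N m)"
    by (auto simp: sum.If_cases intro!: sum.cong)
  ultimately have "potential n N w' + weight n N i \<le> potential n N w + (\<Sum>m\<in>?C. weight n N m)"
    using i(1) unfolding potential_def by (simp add: sum.distrib)
  with sum_weight_children_less[OF T, of i] show ?thesis by linarith
qed

lemma prefers_irrefl: "tree_cpnet n N \<Longrightarrow> \<not> prefers n N w w"
proof -
  assume T: "tree_cpnet n N"
  have "potential n N w' < potential n N w" if "(improving_flip n N)\<^sup>+\<^sup>+ w w'" for w w'
    using that by induction (auto dest: improving_flip_potential_less[OF T])
  then show ?thesis unfolding prefers_def by blast
qed

section \<open>Swaps\<close>

lemma flip_in_outcomes: "v \<in> outcomes n \<Longrightarrow> j < n \<Longrightarrow> flip j v \<in> outcomes n"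
  unfolding outcomes_def flip_def by auto

lemma diffs_flip: "diffs v (flip i v) = {i}" "diffs (flip i v) v = {i}"
  unfolding diffs_def flip_def by auto

lemma flip_commute: "flip i (flip j v) = flip j (flip i v)"
  unfolding flip_def by (rule ext) simp

lemma preferred_value_flip: "fst N i \<noteq> Some j \<Longrightarrow> preferred_value N i (flip j v) = preferred_value N i v"
  unfolding flip_def by (rule preferred_value_upd)

lemma swap_var_eq: "diffs a b = {i} \<Longrightarrow> swap_var (a, b) = i"
  unfolding swap_var_def by auto

lemma concept_swap_iff:
  assumes T: "tree_cpnet n N" and a: "a \<in> outcomes n" and b: "b \<in> outcomes n" and i: "i < n"
    and d: "diffs a b = {i}"
  shows "concept n N (a, b) \<longleftrightarrow> a i = preferred_value N i a"
proof -
  have "a i \<noteq> b i" and agree: "\<And>m. m \<noteq> i \<Longrightarrow> a m = b m" using d by (auto simp: diffs_def)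
  moreover have "b = a(i := b i)" "a = b(i := a i)" by (intro ext, metis agree fun_upd_apply)+
  ultimately have ab: "a i \<noteq> b i" "b = a(i := b i)" "a = b(i := a i)" by blast+
  have pb: "preferred_value N i b = preferred_value N i a"
    using preferred_value_upd[of N i i a] tree_cpnet_parentD[OF T] ab(2) by metis
  show ?thesis
  proof
    assume c: "concept n N (a, b)"
    show "a i = preferred_value N i a"
    proof (rule ccontr)
      assume "a i \<noteq> preferred_value N i a"
      then have "improving_flip n N a b"
        using a i ab unfolding improving_flip_def preferred_value_def by auto
      with c have "prefers n N a a" unfolding concept_def prefers_def by auto
      then show False using prefers_irrefl[OF T] by blast
    qed
  next
    assume "a i = preferred_value N i a"
    then have "improving_flip n N b a"
      using b i ab pb unfolding improving_flip_def preferred_value_def by auto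
    then show "concept n N (a, b)" unfolding concept_def prefers_def by auto
  qed
qed

definition swap_at :: "swap set \<Rightarrow> nat \<Rightarrow> outcome \<Rightarrow> swap" where
  "swap_at X i v = (if (v, flip i v) \<in> X then (v, flip i v) else (flip i v, v))"

lemma swap_at_cases: "swap_at X i v = (v, flip i v) \<or> swap_at X i v = (flip i v, v)"
  unfolding swap_at_def by auto

lemma swap_at_in:
  assumes "swap_set n X" and "v \<in> outcomes n" and "i < n"
  shows "swap_at X i v \<in> X"
proof -
  have "(v, flip i v) \<in> swaps n"
    using assms(2,3) flip_in_outcomes diffs_flip unfolding swaps_def by auto
  then show ?thesis using assms(1) unfolding swap_set_def swap_at_def by auto
qed

lemma swap_var_swap_at: "swap_var (swap_at X i v) = i"
  using swap_at_cases[of X i v] swap_var_eq diffs_flip by metis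

lemma concept_swap_at:
  assumes T: "tree_cpnet n N" and v: "v \<in> outcomes n" and i: "i < n"
  shows "concept n N (swap_at X i v) \<longleftrightarrow> fst (swap_at X i v) i = preferred_value N i v"
proof -
  have "preferred_value N i (flip i v) = preferred_value N i v"
    using preferred_value_flip tree_cpnet_parentD[OF T] by blast
  then show ?thesis
    using swap_at_cases[of X i v] concept_swap_iff[OF T v flip_in_outcomes[OF v i] i]
      concept_swap_iff[OF T flip_in_outcomes[OF v i] v i] diffs_flip
    by auto
qed

lemma swap_at_flip_in_F1:
  assumes "swap_set n X" and "v \<in> outcomes n" and "i < n" and "j < n" and "j \<noteq> i"
  shows "swap_at X i (flip j v) \<in> F1 n X (swap_at X i v)"
proof -
  have "{fst (swap_at X i (flip j v)), snd (swap_at X i (flip j v))} = {flip j v, flip i (flip j v)}"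
    using swap_at_cases[of X i "flip j v"] by auto
  moreover have "{flip j (fst (swap_at X i v)), flip j (snd (swap_at X i v))} = {flip j v, flip i (flip j v)}"
    using swap_at_cases[of X i v] flip_commute[of i j v] by auto
  ultimately show ?thesis
    using assms swap_at_in flip_in_outcomes swap_var_swap_at unfolding F1_def by auto
qed

lemma inj_on_swap_at_flip: "inj_on (\<lambda>j. swap_at X i (flip j v)) (- {i})"
proof (rule inj_onI, rule ccontr)
  fix j j' assume j: "j \<in> - {i}" and "j' \<in> - {i}" and "j \<noteq> j'"
    and eq: "swap_at X i (flip j v) = swap_at X i (flip j' v)"
  have "fst (swap_at X i (flip j v)) j \<noteq> v j"
    using j swap_at_cases[of X i "flip j v"] by (auto simp: flip_def)
  moreover have "fst (swap_at X i (flip j' v)) j = v j"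
    using j \<open>j \<noteq> j'\<close> swap_at_cases[of X i "flip j' v"] by (auto simp: flip_def)
  ultimately show False using eq by simp
qed

lemma finite_F1: "finite (F1 n X x)"
proof (rule finite_subset)
  show "F1 n X x \<subseteq> (\<Union>j<n. {(flip j (fst x), flip j (snd x)), (flip j (snd x), flip j (fst x))})"
    unfolding F1_def by (force simp: doubleton_eq_iff)
qed simp

definition corrupted_probes :: "nat \<Rightarrow> swap set \<Rightarrow> swap set \<Rightarrow> nat \<Rightarrow> outcome \<Rightarrow> nat set" where
  "corrupted_probes n X L i v = {j. j < n \<and> j \<noteq> i \<and> swap_at X i (flip j v) \<in> L}"

lemma card_corrupted_probes_le:
  assumes "swap_set n X" and "v \<in> outcomes n" and "i < n"
  shows "card (corrupted_probes n X L i v) \<le> card (F1 n X (swap_at X i v) \<inter> L)"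
proof (rule card_inj_on_le)
  show "inj_on (\<lambda>j. swap_at X i (flip j v)) (corrupted_probes n X L i v)"
    by (rule inj_on_subset[OF inj_on_swap_at_flip]) (auto simp: corrupted_probes_def)
  show "(\<lambda>j. swap_at X i (flip j v)) ` corrupted_probes n X L i v \<subseteq> F1 n X (swap_at X i v) \<inter> L"
    using swap_at_flip_in_F1[OF assms] by (auto simp: corrupted_probes_def)
qed (simp add: finite_F1)

section \<open>Majority votes\<close>

text \<open>The answer \<open>c\<close> to a swap \<open>(a, b)\<close> on \<open>v\<^sub>i\<close> says that \<open>a\<^sub>i\<close> is preferred iff \<open>c\<close>, so it is
  a vote for the value \<open>a\<^sub>i = c\<close>; \<open>tr\<close> decodes an oracle answer, \<open>None\<close> meaning abstention.\<close>

definition votes ::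
  "('a \<Rightarrow> bool option) \<Rightarrow> nat \<Rightarrow> swap set \<Rightarrow> nat \<Rightarrow> outcome \<Rightarrow> (nat \<Rightarrow> 'a) \<Rightarrow> bool \<Rightarrow> nat set" where
  "votes tr n X i v ans b =
     {j. j < n \<and> j \<noteq> i \<and> map_option (\<lambda>c. fst (swap_at X i (flip j v)) i = c) (tr (ans j)) = Some b}"

definition majority :: "('a \<Rightarrow> bool option) \<Rightarrow> nat \<Rightarrow> swap set \<Rightarrow> nat \<Rightarrow> outcome \<Rightarrow> (nat \<Rightarrow> 'a) \<Rightarrow> bool" where
  "majority tr n X i v ans \<longleftrightarrow> card (votes tr n X i v ans False) < card (votes tr n X i v ans True)"

lemma majority_eqI:
  "card (votes tr n X i v ans (\<not> b)) < card (votes tr n X i v ans b) \<Longrightarrow> majority tr n X i v ans = b"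
  unfolding majority_def by (cases b) auto

lemma majority_cong:
  assumes "\<And>j. j < n \<Longrightarrow> j \<noteq> i \<Longrightarrow> ans j = ans' j"
  shows "majority tr n X i v ans = majority tr n X i v ans'"
proof -
  have "votes tr n X i v ans b = votes tr n X i v ans' b" for b
    unfolding votes_def using assms by (intro Collect_cong) auto
  then show ?thesis by (simp add: majority_def)
qed

text \<open>Every probe outside \<open>L\<close> votes for the preferred value, except the one flipping the parent
  of \<open>v\<^sub>i\<close>, which changes the context.\<close>

lemma majority_eq_preferred_value:
  fixes tr :: "'a \<Rightarrow> bool option" and orc :: "swap \<Rightarrow> 'a"
  assumes T: "tree_cpnet n N" and S: "swap_set n X" and v: "v \<in> outcomes n" and i: "i < n"
    and truthful: "\<And>q. q \<in> X \<Longrightarrow> q \<notin> L \<Longrightarrow> tr (orc q) = Some (concept n N q)"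
    and few: "card (corrupted_probes n X L i v)
      + card {j \<in> corrupted_probes n X L i v. tr (orc (swap_at X i (flip j v))) \<noteq> None} + 3 < n"
  shows "majority tr n X i v (\<lambda>j. orc (swap_at X i (flip j v))) = preferred_value N i v"
proof (rule majority_eqI)
  let ?ans = "\<lambda>j. orc (swap_at X i (flip j v))"
  let ?pv = "preferred_value N i v"
  let ?V = "votes tr n X i v ?ans"
  let ?A = "corrupted_probes n X L i v"
  let ?D = "{j \<in> ?A. tr (?ans j) \<noteq> None}"
  let ?P = "{j. fst N i = Some j}"
  have P: "finite ?P" "card ?P \<le> 1" by (cases "fst N i"; simp)+
  have honest: "j \<in> ?V ?pv" if "j < n" "j \<noteq> i" "j \<notin> ?A" "j \<notin> ?P" for j
  proof -
    have fv: "flip j v \<in> outcomes n" using flip_in_outcomes[OF v \<open>j < n\<close>] .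
    have "tr (?ans j) = Some (concept n N (swap_at X i (flip j v)))"
      using truthful swap_at_in[OF S fv i] that(1-3) by (auto simp: corrupted_probes_def)
    moreover have "concept n N (swap_at X i (flip j v)) \<longleftrightarrow> fst (swap_at X i (flip j v)) i = ?pv"
      using concept_swap_at[OF T fv i] preferred_value_flip[of N i j v] that(4) by simp
    ultimately show ?thesis using that(1,2) unfolding votes_def by auto
  qed
  have fin: "finite (?V b)" "finite ?A" for b
    by (auto intro: finite_subset[of _ "{..<n}"] simp: votes_def corrupted_probes_def)
  have "{..<n} - {i} \<subseteq> ?V ?pv \<union> ?A \<union> ?P"
    using honest by auto
  then have "card ({..<n} - {i}) \<le> card (?V ?pv \<union> ?A \<union> ?P)"
    using fin P(1) by (intro card_mono) auto
  also have "\<dots> \<le> card (?V ?pv) + card ?A + card ?P"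
    by (meson card_Un_le add_right_mono order_trans)
  finally have "card ({..<n} - {i}) \<le> card (?V ?pv) + card ?A + card ?P" .
  then have correct: "n - 1 \<le> card (?V ?pv) + card ?A + 1" using i P(2) by simp
  have "?V (\<not> ?pv) \<subseteq> ?P \<union> ?D"
  proof
    fix j assume j: "j \<in> ?V (\<not> ?pv)"
    then have "j \<notin> ?V ?pv" by (auto simp: votes_def)
    with j honest show "j \<in> ?P \<union> ?D" by (auto simp: votes_def)
  qed
  then have "card (?V (\<not> ?pv)) \<le> card (?P \<union> ?D)"
    using fin(2) P(1) by (intro card_mono) auto
  then have "card (?V (\<not> ?pv)) \<le> card ?P + card ?D"
    using card_Un_le order_trans by blast
  with correct few P(2) show "card (?V (\<not> ?pv)) < card (?V ?pv)" by linarith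
qed

section \<open>The learner\<close>

definition majority_reliable :: "('a \<Rightarrow> bool option) \<Rightarrow> (swap \<Rightarrow> 'a) \<Rightarrow> nat \<Rightarrow> swap set \<Rightarrow> cpnet \<Rightarrow> bool" where
  "majority_reliable tr orc n X N \<longleftrightarrow>
     (\<forall>i<n. \<forall>v\<in>outcomes n. majority tr n X i v (\<lambda>j. orc (swap_at X i (flip j v))) = preferred_value N i v)"

definition others :: "nat \<Rightarrow> nat \<Rightarrow> nat list" where
  "others n i = filter (\<lambda>j. j \<noteq> i) [0..<n]"

lemma set_others: "set (others n i) = {j. j < n \<and> j \<noteq> i}"
  unfolding others_def by auto

lemma length_others:
  assumes "i < n"
  shows "length (others n i) = n - 1"
proof -
  have "length (others n i) = card (set (others n i))" by (rule distinct_card[symmetric]) (simp add: others_def)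
  also have "set (others n i) = {..<n} - {i}" by (auto simp: set_others)
  finally show ?thesis using assms by simp
qed

definition probe :: "swap set \<Rightarrow> nat \<Rightarrow> ('k \<Rightarrow> outcome) \<Rightarrow> 'k \<times> nat \<Rightarrow> swap" where
  "probe X i W kj = swap_at X i (flip (snd kj) (W (fst kj)))"

definition majority_at ::
  "('a \<Rightarrow> bool option) \<Rightarrow> nat \<Rightarrow> swap set \<Rightarrow> nat \<Rightarrow> ('k \<Rightarrow> outcome) \<Rightarrow> ('k \<times> nat \<Rightarrow> 'a) \<Rightarrow> 'k \<Rightarrow> bool" where
  "majority_at tr n X i W a k = majority tr n X i (W k) (\<lambda>j. a (k, j))"

lemma run_ask_probes:
  assumes S: "swap_set n X" and i: "i < n" and R: "majority_reliable tr orc n X N"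
    and W: "\<And>k. k \<in> set ks \<Longrightarrow> W k \<in> outcomes n"
  shows "\<exists>a. run orc X (ask_all (List.product ks (others n i)) (probe X i W)) = Some (a, length ks * (n - 1))
    \<and> (\<forall>k\<in>set ks. majority_at tr n X i W a k = preferred_value N i (W k))"
proof -
  have "probe X i W ` set (List.product ks (others n i)) \<subseteq> X"
    using swap_at_in[OF S flip_in_outcomes[OF W] i] by (auto simp: probe_def set_others)
  from run_ask_all[OF this, of orc] obtain a
    where a: "run orc X (ask_all (List.product ks (others n i)) (probe X i W)) = Some (a, length ks * (n - 1))"
      and ans: "\<forall>kj\<in>set (List.product ks (others n i)). a kj = orc (probe X i W kj)"
    using length_others[OF i] by auto
  have "majority_at tr n X i W a k = preferred_value N i (W k)" if "k \<in> set ks" for k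
  proof -
    have "majority_at tr n X i W a k = majority tr n X i (W k) (\<lambda>j. orc (swap_at X i (flip j (W k))))"
      unfolding majority_at_def using ans that by (intro majority_cong) (auto simp: probe_def set_others)
    then show ?thesis using R i W[OF that] unfolding majority_reliable_def by simp
  qed
  with a show ?thesis by blast
qed

definition uniform_outcome :: "nat \<Rightarrow> bool \<Rightarrow> outcome" where
  "uniform_outcome n b = (\<lambda>j. b \<and> j < n)"

definition bit_outcome :: "nat \<Rightarrow> nat \<Rightarrow> outcome" where
  "bit_outcome n k = (\<lambda>j. j < n \<and> bit j k)"

lemma uniform_outcome_in: "uniform_outcome n b \<in> outcomes n"
  by (simp add: uniform_outcome_def outcomes_def)

lemma bit_outcome_in: "bit_outcome n k \<in> outcomes n"
  by (simp add: bit_outcome_def outcomes_def)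

lemma preferred_value_uniform_outcome:
  assumes T: "tree_cpnet n N" and i: "i < n"
  shows "preferred_value N i (uniform_outcome n b) = snd N i b"
proof (cases "fst N i")
  case None
  then show ?thesis using tree_cpnet_root_pref[OF T i] by (simp add: preferred_value_def ctx_def)
next
  case (Some p)
  then show ?thesis
    using tree_cpnet_parentD[OF T Some] by (simp add: preferred_value_def ctx_def uniform_outcome_def)
qed

lemma preferred_value_bit_outcome:
  "tree_cpnet n N \<Longrightarrow> fst N i = Some p \<Longrightarrow> preferred_value N i (bit_outcome n k) = snd N i (bit p k)"
  using tree_cpnet_parentD by (simp add: preferred_value_def ctx_def bit_outcome_def)

definition decode_bits :: "nat \<Rightarrow> (nat \<Rightarrow> bool) \<Rightarrow> nat" where
  "decode_bits B bs = (LEAST p. \<forall>k<B. bit p k = bs k)"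

lemma eq_if_low_bits_eq:
  fixes j p :: nat
  assumes "j < 2 ^ B" and "p < 2 ^ B" and "\<forall>k<B. bit j k = bit p k"
  shows "j = p"
proof -
  have "take_bit B j = take_bit B p" by (rule bit_eqI) (auto simp: bit_take_bit_iff assms(3))
  then show ?thesis using assms(1,2) by (simp add: take_bit_nat_eq_self)
qed

lemma decode_bits_eq:
  assumes "p < 2 ^ B" and "\<And>k. k < B \<Longrightarrow> bs k = bit p k"
  shows "decode_bits B bs = p"
  unfolding decode_bits_def
proof (rule Least_equality)
  fix q :: nat assume q: "\<forall>k<B. bit q k = bs k"
  show "p \<le> q"
  proof (rule ccontr)
    assume "\<not> p \<le> q"
    then have "q < 2 ^ B" using assms(1) by simp
    moreover have "\<forall>k<B. bit q k = bit p k" using q assms(2) by simp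
    ultimately have "q = p" using eq_if_low_bits_eq assms(1) by blast
    with \<open>\<not> p \<le> q\<close> show False by simp
  qed
qed (use assms(2) in simp)

definition learn_var ::
  "('a \<Rightarrow> bool option) \<Rightarrow> nat \<Rightarrow> swap set \<Rightarrow> nat \<Rightarrow> (swap, 'a, nat option \<times> (bool \<Rightarrow> bool)) strat"
where
  "learn_var tr n X i =
     bind_strat (ask_all (List.product [False, True] (others n i)) (probe X i (uniform_outcome n)))
       (\<lambda>a. let cpt = majority_at tr n X i (uniform_outcome n) a in
         if cpt False = cpt True then Done (None, cpt)
         else bind_strat
           (ask_all (List.product [0..<floorlog 2 n] (others n i)) (probe X i (bit_outcome n)))
           (\<lambda>a'. Done (Some (decode_bits (floorlog 2 n)
              (\<lambda>k. majority_at tr n X i (bit_outcome n) a' k = cpt True)), cpt)))"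

definition var_cost :: "nat \<Rightarrow> cpnet \<Rightarrow> nat \<Rightarrow> nat" where
  "var_cost n N i = 2 * (n - 1) + (if fst N i = None then 0 else floorlog 2 n * (n - 1))"

lemma run_learn_var:
  assumes T: "tree_cpnet n N" and S: "swap_set n X" and i: "i < n" and R: "majority_reliable tr orc n X N"
  shows "run orc X (learn_var tr n X i) = Some ((fst N i, snd N i), var_cost n N i)"
proof -
  obtain a where a: "run orc X (ask_all (List.product [False, True] (others n i)) (probe X i (uniform_outcome n)))
      = Some (a, 2 * (n - 1))"
    and maj: "\<forall>b\<in>set [False, True]. majority_at tr n X i (uniform_outcome n) a b
      = preferred_value N i (uniform_outcome n b)"
    using run_ask_probes[OF S i R, of "[False, True]" "uniform_outcome n"] uniform_outcome_in by auto
  have cpt: "majority_at tr n X i (uniform_outcome n) a = snd N i"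
  proof
    fix b show "majority_at tr n X i (uniform_outcome n) a b = snd N i b"
      using maj preferred_value_uniform_outcome[OF T i] by (cases b) auto
  qed
  show ?thesis
  proof (cases "fst N i")
    case None
    then have "snd N i False = snd N i True" using tree_cpnet_root_pref[OF T i] by blast
    then have "run orc X (learn_var tr n X i) = Some ((None, snd N i), 2 * (n - 1) + 0)"
      unfolding learn_var_def by (intro run_bind_strat[OF a]) (simp add: cpt)
    then show ?thesis using None by (simp add: var_cost_def)
  next
    case (Some p)
    have p: "p < n" using tree_cpnet_parentD[OF T Some] by blast
    have ne: "snd N i False \<noteq> snd N i True" using tree_cpnet_child_pref[OF T i] Some by auto
    obtain a' where a': "run orc X (ask_all (List.product [0..<floorlog 2 n] (others n i)) (probe X i (bit_outcome n)))
        = Some (a', floorlog 2 n * (n - 1))"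
      and bits: "\<forall>k\<in>set [0..<floorlog 2 n]. majority_at tr n X i (bit_outcome n) a' k
        = preferred_value N i (bit_outcome n k)"
      using run_ask_probes[OF S i R, of "[0..<floorlog 2 n]" "bit_outcome n"] bit_outcome_in by auto
    have "(majority_at tr n X i (bit_outcome n) a' k = snd N i True) = bit p k" if "k < floorlog 2 n" for k
      using bits that ne preferred_value_bit_outcome[OF T Some] by (cases "bit p k") auto
    moreover have "p < 2 ^ floorlog 2 n" using p floorlog_bounds[of n 2] by simp
    ultimately have "decode_bits (floorlog 2 n) (\<lambda>k. majority_at tr n X i (bit_outcome n) a' k = snd N i True) = p"
      by (intro decode_bits_eq) auto
    then have "run orc X (bind_strat (ask_all (List.product [0..<floorlog 2 n] (others n i)) (probe X i (bit_outcome n)))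
        (\<lambda>a'. Done (Some (decode_bits (floorlog 2 n) (\<lambda>k. majority_at tr n X i (bit_outcome n) a' k = snd N i True)),
          snd N i))) = Some ((Some p, snd N i), floorlog 2 n * (n - 1) + 0)"
      by (intro run_bind_strat[OF a']) simp
    then have "run orc X (learn_var tr n X i) = Some ((Some p, snd N i), 2 * (n - 1) + (floorlog 2 n * (n - 1) + 0))"
      unfolding learn_var_def using ne by (intro run_bind_strat[OF a]) (simp add: cpt Let_def)
    then show ?thesis using Some by (simp add: var_cost_def)
  qed
qed

definition assemble :: "nat \<Rightarrow> (nat option \<times> (bool \<Rightarrow> bool)) list \<Rightarrow> cpnet" where
  "assemble n rs =
     (\<lambda>i. if i < n then fst (rs ! i) else None, \<lambda>i. if i < n then snd (rs ! i) else (\<lambda>_. False))"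

definition learner :: "('a \<Rightarrow> bool option) \<Rightarrow> nat \<Rightarrow> swap set \<Rightarrow> (swap, 'a, cpnet) strat" where
  "learner tr n X = bind_strat (sequence_strats (map (learn_var tr n X) [0..<n])) (\<lambda>rs. Done (assemble n rs))"

definition query_count :: "nat \<Rightarrow> cpnet \<Rightarrow> nat" where
  "query_count n N = 2 * n * (n - 1) + floorlog 2 n * (n - 1) * num_edges N"

lemma assemble_cpts:
  assumes "tree_cpnet n N"
  shows "assemble n (map (\<lambda>i. (fst N i, snd N i)) [0..<n]) = N"
  using tree_cpnet_beyond[OF assms] by (auto simp: assemble_def prod_eq_iff not_less)

lemma sum_var_cost:
  assumes "tree_cpnet n N"
  shows "sum_list (map (var_cost n N) [0..<n]) = query_count n N"
proof -
  have "sum_list (map (var_cost n N) [0..<n]) = (\<Sum>i<n. var_cost n N i)"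
    by (simp add: sum_list_distinct_conv_sum_set lessThan_atLeast0)
  also have "\<dots> = n * (2 * (n - 1)) + card ({..<n} \<inter> - {i. fst N i = None}) * (floorlog 2 n * (n - 1))"
    unfolding var_cost_def sum.distrib by (simp add: sum.If_cases)
  also have "{..<n} \<inter> - {i. fst N i = None} = {i. fst N i \<noteq> None}"
    using tree_cpnet_parentD[OF assms] by auto
  finally show ?thesis by (simp add: query_count_def num_edges_def algebra_simps)
qed

lemma run_learner:
  assumes T: "tree_cpnet n N" and S: "swap_set n X" and R: "majority_reliable tr orc n X N"
  shows "run orc X (learner tr n X) = Some (N, query_count n N)"
proof -
  have "run orc X (sequence_strats (map (learn_var tr n X) [0..<n]))
      = Some (map (\<lambda>i. (fst N i, snd N i)) [0..<n], sum_list (map (var_cost n N) [0..<n]))"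
    using run_learn_var[OF T S _ R] by (intro run_sequence_strats) auto
  then have "run orc X (learner tr n X) = Some (N, sum_list (map (var_cost n N) [0..<n]) + 0)"
    unfolding learner_def by (rule run_bind_strat) (simp add: assemble_cpts[OF T])
  then show ?thesis using sum_var_cost[OF T] by simp
qed

section \<open>Query complexity\<close>

lemma floorlog_le_two_log:
  assumes "2 \<le> n"
  shows "real (floorlog 2 n) \<le> 2 * log 2 (real n)"
proof -
  have "1 \<le> log 2 (real n)" using assms by simp
  moreover have "real_of_int \<lfloor>log 2 (real n)\<rfloor> \<le> log 2 (real n)" by (rule of_int_floor_le)
  moreover have "real (floorlog 2 n) = 1 + real_of_int \<lfloor>log 2 (real n)\<rfloor>"
    using assms by (simp add: floorlog_def)
  ultimately show ?thesis by linarith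
qed

lemma query_count_le:
  assumes n: "2 \<le> n" and T: "tree_cpnet n N"
  shows "real (query_count n N) \<le> 2 * query_bound n N l"
proof -
  have "real (floorlog 2 n) * real (n - 1) \<le> 2 * log 2 (real n) * real n"
    using floorlog_le_two_log[OF n] n by (intro mult_mono) auto
  then have "real (floorlog 2 n) * real (n - 1) * real (num_edges N)
      \<le> 2 * log 2 (real n) * real n * real (num_edges N)"
    by (rule mult_right_mono) simp
  also have "\<dots> = 2 * (real (num_edges N) * real n * log 2 (real n))" by (simp add: algebra_simps)
  finally have edges: "real (floorlog 2 n) * real (n - 1) * real (num_edges N)
      \<le> 2 * (real (num_edges N) * real n * log 2 (real n))" .
  have "2 * n * (n - 1) \<le> 2 * n ^ 2" by (simp add: power2_eq_square)
  then have vars: "real (2 * n * (n - 1)) \<le> 2 * real n ^ 2" by (simp only: of_nat_le_iff flip: of_nat_power)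
  have "real (query_count n N)
      = real (2 * n * (n - 1)) + real (floorlog 2 n) * real (n - 1) * real (num_edges N)"
    unfolding query_count_def by (simp only: of_nat_add of_nat_mult)
  also have "\<dots> \<le> 2 * real n ^ 2 + 2 * (real (num_edges N) * real n * log 2 (real n))"
    using vars edges by (rule add_mono)
  also have "\<dots> = 2 * query_bound n N l" by (simp add: query_bound_def algebra_simps)
  finally show ?thesis .
qed

lemma query_bound_le_poly: "query_bound n N l \<le> 2 * real (n + cpt_size n N + l + 1) ^ 3"
proof -
  define M where "M = real (n + cpt_size n N + l + 1)"
  have n: "real n \<le> M" and e: "real (num_edges N) \<le> M" and M: "1 \<le> M"
    by (simp_all add: M_def cpt_size_def)
  have "log 2 (real n) \<le> real n"
  proof (cases "n = 0")
    case False
    then have "log 2 (real n) < log 2 (2 ^ n)" by (intro log_less) (auto simp: less_exp)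
    then show ?thesis by simp
  qed (simp add: log_def)
  then have lg: "log 2 (real n) \<le> M" using n by linarith
  have "real n ^ 2 \<le> M ^ 2" using n by (intro power_mono) auto
  also have "\<dots> \<le> M ^ 3" using M by (intro power_increasing) auto
  finally have "real n ^ 2 \<le> M ^ 3" .
  moreover have "real (num_edges N) * real n * log 2 (real n) \<le> M ^ 3"
  proof (cases "n = 0")
    case False
    then have "0 \<le> log 2 (real n)" by simp
    then show ?thesis unfolding power3_eq_cube using n e lg by (intro mult_mono) auto
  qed (use M in simp)
  ultimately show ?thesis unfolding query_bound_def M_def by linarith
qed

lemma learns_with_if_majority_reliable:
  assumes "\<And>n X N L. swap_set n X \<Longrightarrow> tree_cpnet n N \<Longrightarrow> L \<subseteq> X \<Longrightarrow> P n X L \<Longrightarrow>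
    2 \<le> n \<and> majority_reliable tr (orc n N L) n X N"
  shows "learns_with orc P (\<lambda>n N l. 2 * query_bound n N l)"
  unfolding learns_with_def
proof (intro exI[of _ "learner tr"] allI impI)
  fix n X N L assume S: "swap_set n X" and T: "tree_cpnet n N" and "L \<subseteq> X" "P n X L"
  with assms have "2 \<le> n" and "majority_reliable tr (orc n N L) n X N" by blast+
  then show "\<exists>q. run (orc n N L) X (learner tr n X) = Some (N, q) \<and> real q \<le> 2 * query_bound n N (card L)"
    using run_learner[OF T S] query_count_le[OF _ T] by blast
qed

lemma learns_with_mono:
  assumes "learns_with orc P B" and "\<And>n N l. B n N l \<le> B' n N l"
  shows "learns_with orc P B'"
  using assms unfolding learns_with_def by (meson order_trans)

lemma learnable_if_learns_with_query_bound:
  assumes "learns_with orc P (\<lambda>n N l. 2 * query_bound n N l)"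
  shows "learnable orc P"
proof -
  have "learns_with orc P (\<lambda>n N l. 4 * real (n + cpt_size n N + l + 1) ^ 3)"
  proof (rule learns_with_mono[OF assms])
    show "2 * query_bound n N l \<le> 4 * real (n + cpt_size n N + l + 1) ^ 3" for n N l
      using query_bound_le_poly[of n N l] by linarith
  qed
  then show ?thesis unfolding learnable_def by blast
qed

section \<open>Limited and malicious oracles\<close>

lemma limited_majority_reliable:
  assumes T: "tree_cpnet n N" and S: "swap_set n X" and "4 < n"
    and few: "\<forall>x\<in>X. card (F1 n X x \<inter> L) \<le> n - 4"
  shows "majority_reliable (\<lambda>x. x) (limited_oracle n N L) n X N"
  unfolding majority_reliable_def
proof (intro allI impI ballI)
  fix i v assume i: "i < n" and v: "v \<in> outcomes n"
  let ?A = "corrupted_probes n X L i v"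
  have "card ?A \<le> n - 4"
    using card_corrupted_probes_le[OF S v i, of L] few[rule_format, OF swap_at_in[OF S v i]] by linarith
  moreover have "card {j \<in> ?A. limited_oracle n N L (swap_at X i (flip j v)) \<noteq> None} = 0"
    by (simp add: corrupted_probes_def limited_oracle_def)
  ultimately have "card ?A + card {j \<in> ?A. limited_oracle n N L (swap_at X i (flip j v)) \<noteq> None} + 3 < n"
    using \<open>4 < n\<close> by linarith
  then show "majority (\<lambda>x. x) n X i v (\<lambda>j. limited_oracle n N L (swap_at X i (flip j v))) = preferred_value N i v"
    by (rule majority_eq_preferred_value[OF T S v i, where tr = "\<lambda>x. x", rotated])
      (simp add: limited_oracle_def)
qed

lemma malicious_majority_reliable:
  assumes T: "tree_cpnet n N" and S: "swap_set n X" and "4 < n"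
    and few: "\<forall>x\<in>X. card (F1 n X x \<inter> L) \<le> (n - 1) div 2 - 2"
  shows "majority_reliable Some (malicious_oracle n N L) n X N"
  unfolding majority_reliable_def
proof (intro allI impI ballI)
  fix i v assume i: "i < n" and v: "v \<in> outcomes n"
  let ?A = "corrupted_probes n X L i v"
  have "card ?A \<le> (n - 1) div 2 - 2"
    using card_corrupted_probes_le[OF S v i, of L] few[rule_format, OF swap_at_in[OF S v i]] by linarith
  moreover have "card {j \<in> ?A. Some (malicious_oracle n N L (swap_at X i (flip j v))) \<noteq> None} \<le> card ?A"
    by (intro card_mono) (auto simp: corrupted_probes_def)
  moreover have "2 * ((n - 1) div 2 - 2) + 3 < n" using \<open>4 < n\<close> by presburger
  ultimately have "card ?A + card {j \<in> ?A. Some (malicious_oracle n N L (swap_at X i (flip j v))) \<noteq> None} + 3 < n"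
    by linarith
  then show "majority Some n X i v (\<lambda>j. malicious_oracle n N L (swap_at X i (flip j v))) = preferred_value N i v"
    by (rule majority_eq_preferred_value[OF T S v i, where tr = Some, rotated])
      (simp add: malicious_oracle_def)
qed

theorem corollary4:
  shows "(learnable limited_oracle
            (\<lambda>n X L. 4 < n \<and> (\<forall>x\<in>X. card (F1 n X x \<inter> L) \<le> n - 4))
          \<and> (\<exists>C. learns_with limited_oracle
            (\<lambda>n X L. 4 < n \<and> (\<forall>x\<in>X. card (F1 n X x \<inter> L) \<le> n - 4))
            (\<lambda>n N l. C * query_bound n N l)))
       \<and> (learnable malicious_oracle
            (\<lambda>n X L. 4 < n \<and> (\<forall>x\<in>X. card (F1 n X x \<inter> L) \<le> (n - 1) div 2 - 2))
          \<and> (\<exists>C. learns_with malicious_oracle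
            (\<lambda>n X L. 4 < n \<and> (\<forall>x\<in>X. card (F1 n X x \<inter> L) \<le> (n - 1) div 2 - 2))
            (\<lambda>n N l. C * query_bound n N l)))"
proof -
  have limited: "learns_with limited_oracle
      (\<lambda>n X L. 4 < n \<and> (\<forall>x\<in>X. card (F1 n X x \<inter> L) \<le> n - 4)) (\<lambda>n N l. 2 * query_bound n N l)"
    by (rule learns_with_if_majority_reliable) (auto intro: limited_majority_reliable)
  have malicious: "learns_with malicious_oracle
      (\<lambda>n X L. 4 < n \<and> (\<forall>x\<in>X. card (F1 n X x \<inter> L) \<le> (n - 1) div 2 - 2)) (\<lambda>n N l. 2 * query_bound n N l)"
    by (rule learns_with_if_majority_reliable) (auto intro: malicious_majority_reliable)
  show ?thesis
    by (intro conjI exI[of _ 2] learnable_if_learns_with_query_bound limited malicious)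
qed

end
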